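(* Let $p^*\in(0,1)$ be the solution of $p^{(2-p)/(1-p)}=(1-p)^2$ ($p^*\approx0.594$). For every $p\in[p^*,1)$ and every integer $\ell\ge0$, \[ \int_{p^{1/(1-p)}}^1\frac{(1-t)^\ell}{t^p}\,dt\ \ge\ (1-p)^\ell . \] *)

theory Defs
  imports "HOL-Analysis.Analysis"
begin

definition p_star :: real where
  "p_star = (THE p. 0 < p \<and> p < 1 \<and> p powr ((2 - p) / (1 - p)) = (1 - p)^2)"

end

theory Submission imports Defs begin

text \<open>
  Put c = 1 - p. Convexity of x^l gives the tangent bound
  (1 - t)^l \<ge> c^l + l c^(l-1) (1 - t - c). The lower limit a = p^(1/(1-p)) satisfies
  a^(1-p) = p, so t^(-p) is a probability density on [a, 1]. Integrating the tangent bound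
  against it yields c^l plus l c^(l-1) times the integral of (p - t) t^(-p) over [a, 1],
  which equals p - (1 - a^(2-p))/(2 - p) and is nonnegative exactly when
  p^((2-p)/(1-p)) \<ge> (1 - p)^2. In logarithmic form this compares a function that is
  strictly increasing on (0, 1) with its value at its zero p*.
\<close>

lemma ln_plus_two_div_gt:
  fixes x :: real
  assumes "0 < x" "x < 1"
  shows "x + 1 < ln x + 2 / x"
proof -
  have "ln (1 / x) \<le> 1 / x - 1"
    using assms by (intro ln_le_minus_one) simp
  then have "1 - 1 / x \<le> ln x"
    using assms by (simp add: ln_div)
  moreover have "x < 1 / x"
    using assms by (simp add: field_simps) (metis assms(2) mult_strict_mono' less_eq_real_def mult_1)
  ultimately show ?thesis
    by (simp add: diff_divide_distrib)
qed

definition p_star_gap :: "real \<Rightarrow> real" where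
  "p_star_gap p = (2 - p) / (1 - p) * ln p - 2 * ln (1 - p)"

lemma p_star_gap_eq_ln_diff:
  assumes "0 < p" "p < 1"
  shows "p_star_gap p = ln (p powr ((2 - p) / (1 - p))) - ln ((1 - p)\<^sup>2)"
  using assms by (simp add: p_star_gap_def ln_powr ln_realpow)

lemma p_star_gap_nonneg_iff:
  assumes "0 < p" "p < 1"
  shows "0 \<le> p_star_gap p \<longleftrightarrow> (1 - p)\<^sup>2 \<le> p powr ((2 - p) / (1 - p))"
  using assms ln_le_cancel_iff[of "(1 - p)\<^sup>2" "p powr ((2 - p) / (1 - p))"]
  unfolding p_star_gap_eq_ln_diff[OF assms] by simp

lemma p_star_gap_eq_0_iff:
  assumes "0 < p" "p < 1"
  shows "p_star_gap p = 0 \<longleftrightarrow> p powr ((2 - p) / (1 - p)) = (1 - p)\<^sup>2"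
  using assms ln_inj_iff[of "p powr ((2 - p) / (1 - p))" "(1 - p)\<^sup>2"]
  unfolding p_star_gap_eq_ln_diff[OF assms] by simp

lemma has_real_derivative_p_star_gap:
  assumes "0 < z" "z < 1"
  shows "(p_star_gap has_real_derivative (ln z + 2 / z - 1 - z) / (1 - z)\<^sup>2) (at z)"
proof -
  have "((\<lambda>p. (2 - p) / (1 - p)) has_real_derivative 1 / (1 - z)\<^sup>2) (at z)"
    using assms by (auto intro!: derivative_eq_intros simp: power2_eq_square)
  then have "(p_star_gap has_real_derivative
      1 / (1 - z)\<^sup>2 * ln z + 1 / z * ((2 - z) / (1 - z)) - 2 * (- 1 / (1 - z))) (at z)"
    unfolding p_star_gap_def using assms
    by (intro DERIV_diff DERIV_mult DERIV_cmult) (auto intro!: derivative_eq_intros)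
  moreover have "1 / (1 - z)\<^sup>2 * ln z + 1 / z * ((2 - z) / (1 - z)) - 2 * (- 1 / (1 - z))
      = (ln z + 2 / z - 1 - z) / (1 - z)\<^sup>2"
  proof -
    have "z \<noteq> 0" "1 - z \<noteq> 0"
      using assms by auto
    then show ?thesis
      by (simp add: divide_simps power2_eq_square) (simp add: algebra_simps)
  qed
  ultimately show ?thesis
    by simp
qed

lemma p_star_gap_strict_mono: "strict_mono_on {0<..<1} p_star_gap"
proof (rule strict_mono_onI)
  fix x y :: real
  assume "x \<in> {0<..<1}" "y \<in> {0<..<1}" "x < y"
  from \<open>x < y\<close> show "p_star_gap x < p_star_gap y"
  proof (rule DERIV_pos_imp_increasing)
    fix z assume "x \<le> z" "z \<le> y"
    with \<open>x \<in> {0<..<1}\<close> \<open>y \<in> {0<..<1}\<close> have "0 < z" "z < 1"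
      by auto
    then have "0 < (ln z + 2 / z - 1 - z) / (1 - z)\<^sup>2"
      using ln_plus_two_div_gt[of z] by simp
    then show "\<exists>d. (p_star_gap has_real_derivative d) (at z) \<and> 0 < d"
      using has_real_derivative_p_star_gap[OF \<open>0 < z\<close> \<open>z < 1\<close>] by blast
  qed
qed

lemma p_star_gap_has_root: "\<exists>r. 1/2 \<le> r \<and> r \<le> 2/3 \<and> p_star_gap r = 0"
proof (rule IVT')
  show "p_star_gap (1/2) \<le> 0"
    by (simp add: p_star_gap_def)
  have "(2 - 2/3) / (1 - 2/3) = (4::real)"
    by simp
  moreover have "(1 - 2/3 :: real)\<^sup>2 \<le> (2/3) powr 4"
    by (simp add: power2_eq_square eval_nat_numeral)
  ultimately show "0 \<le> p_star_gap (2/3)"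
    using p_star_gap_nonneg_iff[of "2/3"] by (simp only:)
  show "continuous_on {1/2..2/3} p_star_gap"
    unfolding p_star_gap_def by (intro continuous_intros) auto
qed simp

lemma p_star_root: "0 < p_star" "p_star < 1" "p_star_gap p_star = 0"
proof -
  obtain r where r: "1/2 \<le> r" "r \<le> 2/3" "p_star_gap r = 0"
    using p_star_gap_has_root by blast
  then have "r \<in> {0<..<1}"
    by simp
  have "p_star = r"
    unfolding p_star_def
  proof (rule the_equality)
    show "0 < r \<and> r < 1 \<and> r powr ((2 - r) / (1 - r)) = (1 - r)\<^sup>2"
      using \<open>r \<in> {0<..<1}\<close> r(3) p_star_gap_eq_0_iff[of r] by simp
  next
    fix q :: real
    assume "0 < q \<and> q < 1 \<and> q powr ((2 - q) / (1 - q)) = (1 - q)\<^sup>2"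
    then have "q \<in> {0<..<1}" "p_star_gap r = p_star_gap q"
      using r(3) p_star_gap_eq_0_iff[of q] by simp_all
    then show "q = r"
      using strict_mono_on_eqD[OF p_star_gap_strict_mono _ \<open>r \<in> {0<..<1}\<close>] by blast
  qed
  with \<open>r \<in> {0<..<1}\<close> r(3) show "0 < p_star" "p_star < 1" "p_star_gap p_star = 0"
    by simp_all
qed

lemma powr_ge_square_if_p_star_le:
  assumes "p_star \<le> p" "p < 1"
  shows "(1 - p)\<^sup>2 \<le> p powr ((2 - p) / (1 - p))"
proof -
  have "p \<in> {0<..<1}" "p_star \<in> {0<..<1}"
    using assms p_star_root by simp_all
  then have "p_star_gap p_star \<le> p_star_gap p"
    using assms(1) strict_mono_on_leD[OF p_star_gap_strict_mono] by blast
  with \<open>p \<in> {0<..<1}\<close> show ?thesis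
    using p_star_root(3) p_star_gap_nonneg_iff[of p] by simp
qed

lemma power_ge_tangent_line:
  fixes c x :: real
  assumes "0 < c" "0 \<le> x"
  shows "c ^ l + real l * c ^ (l - 1) * (x - c) \<le> x ^ l"
proof (cases l)
  case 0
  then show ?thesis by simp
next
  case (Suc m)
  have "1 + real l * (x / c - 1) \<le> (x / c) ^ l"
    using Bernoulli_inequality[of "x / c - 1" l] assms by simp
  then have "c ^ l * (1 + real l * (x / c - 1)) \<le> c ^ l * (x / c) ^ l"
    using assms by (intro mult_left_mono) auto
  moreover have "c ^ l * (1 + real l * (x / c - 1)) = c ^ l + real l * c ^ (l - 1) * (x - c)"
    using assms Suc by (simp add: field_simps)
  ultimately show ?thesis
    using assms by (simp add: power_divide)
qed

lemma integral_power_ge_power_of_mean: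
  fixes f w :: "'a::euclidean_space \<Rightarrow> real"
  assumes w: "(w has_integral 1) S"
    and mean: "((\<lambda>t. (f t - c) * w t) has_integral m) S" "0 \<le> m"
    and "0 < c" "\<And>t. t \<in> S \<Longrightarrow> 0 \<le> f t \<and> 0 \<le> w t"
    and "(\<lambda>t. f t ^ l * w t) integrable_on S"
  shows "c ^ l \<le> integral S (\<lambda>t. f t ^ l * w t)"
proof -
  let ?tangent = "\<lambda>t. c ^ l * w t + real l * c ^ (l - 1) * ((f t - c) * w t)"
  have tangent: "(?tangent has_integral c ^ l * 1 + real l * c ^ (l - 1) * m) S"
    by (intro has_integral_add has_integral_mult_right w mean)
  have "?tangent t \<le> f t ^ l * w t" if "t \<in> S" for t
  proof -
    have "?tangent t = (c ^ l + real l * c ^ (l - 1) * (f t - c)) * w t"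
      by (simp add: algebra_simps)
    also have "\<dots> \<le> f t ^ l * w t"
      using assms that by (intro mult_right_mono power_ge_tangent_line) auto
    finally show ?thesis .
  qed
  then have "c ^ l * 1 + real l * c ^ (l - 1) * m \<le> integral S (\<lambda>t. f t ^ l * w t)"
    using has_integral_le[OF tangent integrable_integral[OF assms(6)]] by blast
  moreover have "0 \<le> real l * c ^ (l - 1) * m"
    using \<open>0 < c\<close> \<open>0 \<le> m\<close> by simp
  ultimately show ?thesis
    by linarith
qed

lemma has_integral_powr_interval:
  fixes a b r :: real
  assumes "0 < a" "a \<le> b" "r \<noteq> -1"
  shows "((\<lambda>t. t powr r) has_integral (b powr (r + 1) - a powr (r + 1)) / (r + 1)) {a..b}"
proof -
  have "((\<lambda>t. t powr r) has_integral b powr (r + 1) / (r + 1) - a powr (r + 1) / (r + 1)) {a..b}"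
  proof (rule fundamental_theorem_of_calculus[OF \<open>a \<le> b\<close>])
    fix x assume "x \<in> {a..b}"
    then have "((\<lambda>t. t powr (r + 1) / (r + 1)) has_real_derivative x powr r) (at x)"
      using assms by (auto intro!: derivative_eq_intros)
    then show "((\<lambda>t. t powr (r + 1) / (r + 1)) has_vector_derivative x powr r) (at x within {a..b})"
      by (simp add: has_real_derivative_iff_has_vector_derivative has_vector_derivative_at_within)
  qed
  then show ?thesis
    by (simp add: diff_divide_distrib)
qed

lemma has_integral_p_star_weight:
  fixes p :: real
  assumes "0 < p" "p < 1"
  defines "a \<equiv> p powr (1 / (1 - p))"
  shows "((\<lambda>t. t powr (- p)) has_integral 1) {a..1}"
    and "((\<lambda>t. (p - t) * t powr (- p)) has_integral
           p - (1 - p powr ((2 - p) / (1 - p))) / (2 - p)) {a..1}"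
proof -
  have "0 < a" "a \<le> 1"
    using assms by (auto intro: powr_le1)
  have "a powr (1 - p) = p" "a powr (2 - p) = p powr ((2 - p) / (1 - p))"
    using assms by (simp_all add: powr_powr)
  note powr_integral = has_integral_powr_interval[OF \<open>0 < a\<close> \<open>a \<le> 1\<close>]
  show weight: "((\<lambda>t. t powr (- p)) has_integral 1) {a..1}"
    using powr_integral[of "- p"] assms \<open>a powr (1 - p) = p\<close> by simp
  have "((\<lambda>t. p * t powr (- p) - t powr (1 - p)) has_integral
          p - (1 - p powr ((2 - p) / (1 - p))) / (2 - p)) {a..1}"
    using has_integral_diff[OF has_integral_mult_right[OF weight] powr_integral[of "1 - p"]]
      assms \<open>a powr (2 - p) = _\<close> by simp
  then show "((\<lambda>t. (p - t) * t powr (- p)) has_integral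
           p - (1 - p powr ((2 - p) / (1 - p))) / (2 - p)) {a..1}"
  proof (rule has_integral_eq[rotated])
    fix t assume "t \<in> {a..1}"
    then have "t powr (1 - p) = t * t powr (- p)"
      using \<open>0 < a\<close> powr_add[of t 1 "- p"] by simp
    then show "p * t powr (- p) - t powr (1 - p) = (p - t) * t powr (- p)"
      by (simp add: left_diff_distrib)
  qed
qed

theorem lemma4:
  fixes p :: real and l :: nat
  assumes "p_star \<le> p" and "p < 1"
  shows "integral {p powr (1 / (1 - p))..1} (\<lambda>t. (1 - t) ^ l / t powr p) \<ge> (1 - p) ^ l"
proof -
  have "0 < p"
    using assms p_star_root by linarith
  let ?a = "p powr (1 / (1 - p))"
  have "0 < ?a"
    using \<open>0 < p\<close> by simp
  have "1 - p powr ((2 - p) / (1 - p)) \<le> p * (2 - p)"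
    using powr_ge_square_if_p_star_le[OF assms] by (simp add: power2_eq_square algebra_simps)
  then have "0 \<le> p - (1 - p powr ((2 - p) / (1 - p))) / (2 - p)"
    using \<open>p < 1\<close> by (simp add: pos_divide_le_eq)
  moreover have "((\<lambda>t. ((1 - t) - (1 - p)) * t powr (- p)) has_integral
      p - (1 - p powr ((2 - p) / (1 - p))) / (2 - p)) {?a..1}"
    using has_integral_p_star_weight(2)[OF \<open>0 < p\<close> \<open>p < 1\<close>] by simp
  moreover have "(\<lambda>t. (1 - t) ^ l * t powr (- p)) integrable_on {?a..1}"
    using \<open>0 < ?a\<close> by (intro integrable_continuous_interval continuous_intros) auto
  ultimately have "(1 - p) ^ l \<le> integral {?a..1} (\<lambda>t. (1 - t) ^ l * t powr (- p))"
    using \<open>p < 1\<close> \<open>0 < ?a\<close>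
    by (intro integral_power_ge_power_of_mean has_integral_p_star_weight(1)[OF \<open>0 < p\<close>]) auto
  also have "\<dots> = integral {?a..1} (\<lambda>t. (1 - t) ^ l / t powr p)"
    by (simp add: powr_minus divide_inverse)
  finally show ?thesis .
qed

end
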